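(* Let $N\geq1$ and let $|\psi_N\rangle=\sum_{k=1}^{D}|x_k\rangle^{\otimes N}\in\mathrm{Sym}_N$ with $|x_k\rangle\in\mathbb{C}^2$, where $D=D(\psi_N)$ is the optimal bond dimension of $|\psi_N\rangle$, and assume $D(\psi_N)\leq\lfloor N/2\rfloor+1$. Then the $(N+1)$-qubit state $|\psi_{N+1}\rangle=\sum_{k=1}^{D}|x_k\rangle^{\otimes(N+1)}$ is nonzero and has optimal bond dimension $D(\psi_{N+1})=D(\psi_N)$.
   Context: The one-qubit space is $\mathbb{C}^2$ with standard basis $\{|0\rangle,|1\rangle\}$. For $N\geq1$, $\mathrm{Sym}_N\subset(\mathbb{C}^2)^{\otimes N}$ denotes the symmetric subspace, i.e. the vectors invariant under every permutation of the $N$ tensor factors; it has dimension $N+1$. For a nonzero $|\psi\rangle\in\mathrm{Sym}_N$, the optimal bond dimension $D(\psi)$ is the minimal integer $D\geq1$ such that $|\psi\rangle=\sum_{k=1}^D|x_k\rangle^{\otimes N}$ for some (not necessarily normalized) vectors $|x_k\rangle\in\mathbb{C}^2$. *)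

theory Defs
  imports Complex_Main "HOL-Combinatorics.Permutations"
begin

text \<open>A vector of C^2 is a function bool => complex (False = |0>, True = |1>).
 A vector of (C^2)^{\<otimes>N} is a function on bit strings, bool list => complex,
 supported on strings of length N (coefficients in the computational basis).\<close>

definition qvec :: "nat \<Rightarrow> (bool list \<Rightarrow> complex) \<Rightarrow> bool" where
  "qvec N \<psi> \<longleftrightarrow> (\<forall>bs. length bs \<noteq> N \<longrightarrow> \<psi> bs = 0)"

definition Sym :: "nat \<Rightarrow> (bool list \<Rightarrow> complex) set" where
  "Sym N = {\<psi>. qvec N \<psi> \<and>
     (\<forall>(p::nat \<Rightarrow> nat) bs. p permutes {..<N} \<longrightarrow> length bs = N \<longrightarrow>
        \<psi> (map (\<lambda>i. bs ! p i) [0..<N]) = \<psi> bs)}"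

definition tpow :: "nat \<Rightarrow> (bool \<Rightarrow> complex) \<Rightarrow> bool list \<Rightarrow> complex" where
  "tpow N x = (\<lambda>bs. if length bs = N then prod_list (map x bs) else 0)"

definition has_decomp :: "nat \<Rightarrow> (bool list \<Rightarrow> complex) \<Rightarrow> nat \<Rightarrow> bool" where
  "has_decomp N \<psi> D \<longleftrightarrow>
     (\<exists>xs :: nat \<Rightarrow> bool \<Rightarrow> complex. \<psi> = (\<lambda>bs. \<Sum>k\<in>{1..D}. tpow N (xs k) bs))"

definition bond_dim :: "nat \<Rightarrow> (bool list \<Rightarrow> complex) \<Rightarrow> nat" where
  "bond_dim N \<psi> = (LEAST D. D \<ge> 1 \<and> has_decomp N \<psi> D)"

end

theory Submission
  imports Defs
begin

text \<open>In an optimal decomposition the vectors x k are nonzero and pairwise non-proportional: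
  otherwise a zero term could be dropped, or two proportional terms merged into one.
  Evaluating a sum of n-th tensor powers at the strings 0^(n-m) 1^m yields the binary power
  sums of degree n, and for at most n + 1 pairwise non-proportional vectors these are linearly
  independent (a Vandermonde argument, by induction on n). If the (N + 1)-qubit state had a
  decomposition into D' < D terms y j, the D + D' \<le> N + 2 vectors x k, y j would force
  each x k to be proportional to some y j, distinct x k to distinct y j, so D \<le> D'.
  The case D' = 0 shows that the (N + 1)-qubit state is nonzero.\<close>

lemma complex_nth_root_exists:
  assumes "n \<ge> 1"
  shows "\<exists>r::complex. r ^ n = w"
proof -
  have "rcis (root n (cmod w)) (Arg w / real n) ^ n = w"
    using assms by (simp add: DeMoivre2 real_root_pow_pos2 rcis_cmod_Arg)
  then show ?thesis by blast
qed

lemma qubit_eq_zero_iff: "u = (\<lambda>_. 0) \<longleftrightarrow> u False = 0 \<and> u True = 0"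
  for u :: "bool \<Rightarrow> complex"
  by (metis (full_types))

lemma tpow_scaled: "tpow n (\<lambda>v. c * f v) bs = c ^ n * tpow n f bs"
proof -
  have "prod_list (map (\<lambda>v. c * f v) bs) = c ^ length bs * prod_list (map f bs)"
    by (induction bs) (auto simp: mult_ac)
  then show ?thesis unfolding tpow_def by simp
qed

lemma tpow_zero_vector: "n \<ge> 1 \<Longrightarrow> tpow n (\<lambda>_. 0) bs = 0"
  unfolding tpow_def by (auto simp: map_replicate_const prod_list_replicate)

definition weight_string :: "nat \<Rightarrow> nat \<Rightarrow> bool list" where
  "weight_string n m = replicate (n - m) False @ replicate m True"

lemma tpow_weight_string:
  "m \<le> n \<Longrightarrow> tpow n f (weight_string n m) = f False ^ (n - m) * f True ^ m"
  unfolding tpow_def weight_string_def by (simp add: prod_list_replicate)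

definition proportional :: "(bool \<Rightarrow> complex) \<Rightarrow> (bool \<Rightarrow> complex) \<Rightarrow> bool" where
  "proportional u w \<longleftrightarrow> u False * w True = w False * u True"

lemma proportional_commute: "proportional u w \<longleftrightarrow> proportional w u"
  unfolding proportional_def by (auto simp: mult.commute)

lemma proportional_imp_multiple:
  assumes "u \<noteq> (\<lambda>_. 0)" "proportional u w"
  shows "\<exists>t. w = (\<lambda>v. t * u v)"
proof (cases "u False = 0")
  case False
  have "w v = w False / u False * u v" for v
    using False assms(2) by (cases v) (auto simp: proportional_def field_simps)
  then show ?thesis by blast
next
  case True
  then have "u True \<noteq> 0" using assms(1) qubit_eq_zero_iff by blast
  with True assms(2) have "w v = w True / u True * u v" for v
    by (cases v) (auto simp: proportional_def field_simps)
  then show ?thesis by blast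
qed

lemma proportional_trans:
  assumes "w \<noteq> (\<lambda>_. 0)" "proportional u w" "proportional v w"
  shows "proportional u v"
proof -
  obtain s t where "u = (\<lambda>b. s * w b)" "v = (\<lambda>b. t * w b)"
    using proportional_imp_multiple[OF assms(1)] assms(2,3) proportional_commute by metis
  then show ?thesis unfolding proportional_def by (simp add: mult_ac)
qed

lemma power_sums_vanish_singleton:
  fixes u :: "bool \<Rightarrow> complex"
  assumes "u \<noteq> (\<lambda>_. 0)" "\<forall>m\<le>n. c * u False ^ (n - m) * u True ^ m = 0"
  shows "c = 0"
proof -
  have "c * u False ^ n = 0" "c * u True ^ n = 0"
    using assms(2) by (auto dest: spec[of _ 0] spec[of _ n])
  with assms(1) qubit_eq_zero_iff show ?thesis by auto
qed

text \<open>Multiplying the weights by the linear form vanishing on v i1 lowers the degree.\<close>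

lemma power_sums_vanish_reduce_degree:
  fixes v :: "'i \<Rightarrow> bool \<Rightarrow> complex"
  assumes "\<forall>m\<le>Suc n. (\<Sum>i\<in>I. c i * v i False ^ (Suc n - m) * v i True ^ m) = 0"
  shows "\<forall>m\<le>n. (\<Sum>i\<in>I. c i * (v i1 True * v i False - v i1 False * v i True)
                          * v i False ^ (n - m) * v i True ^ m) = 0"
proof (intro allI impI)
  fix m assume m: "m \<le> n"
  have "(\<Sum>i\<in>I. c i * (v i1 True * v i False - v i1 False * v i True)
                   * v i False ^ (n - m) * v i True ^ m)
      = v i1 True * (\<Sum>i\<in>I. c i * v i False ^ (Suc n - m) * v i True ^ m)
        - v i1 False * (\<Sum>i\<in>I. c i * v i False ^ (Suc n - Suc m) * v i True ^ Suc m)"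
    unfolding sum_distrib_left sum_subtractf[symmetric]
    by (rule sum.cong) (use m in \<open>auto simp: Suc_diff_le algebra_simps\<close>)
  also have "\<dots> = 0"
    using assms[rule_format, of m] assms[rule_format, of "Suc m"] m by simp
  finally show "(\<Sum>i\<in>I. c i * (v i1 True * v i False - v i1 False * v i True)
                   * v i False ^ (n - m) * v i True ^ m) = 0" .
qed

lemma power_sums_vanish_imp_weight_zero:
  fixes v :: "'i \<Rightarrow> bool \<Rightarrow> complex"
  assumes "finite I" "i0 \<in> I" "card I \<le> n + 1" "v i0 \<noteq> (\<lambda>_. 0)"
    "\<forall>i\<in>I - {i0}. \<not> proportional (v i0) (v i)"
    "\<forall>m\<le>n. (\<Sum>i\<in>I. c i * v i False ^ (n - m) * v i True ^ m) = 0"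
  shows "c i0 = 0"
  using assms
proof (induction n arbitrary: I c)
  case 0
  then have "I = {i0}" by (auto simp: card_le_Suc0_iff_eq)
  with "0.prems"(4,6) show ?case by (intro power_sums_vanish_singleton) auto
next
  case (Suc n)
  show ?case
  proof (cases "I = {i0}")
    case True
    with Suc.prems(4,6) show ?thesis by (intro power_sums_vanish_singleton) auto
  next
    case False
    then obtain i1 where i1: "i1 \<in> I" "i1 \<noteq> i0" using Suc.prems(2) by blast
    define c' where "c' i = c i * (v i1 True * v i False - v i1 False * v i True)" for i
    have "\<forall>m\<le>n. (\<Sum>i\<in>I. c' i * v i False ^ (n - m) * v i True ^ m) = 0"
      using power_sums_vanish_reduce_degree[OF Suc.prems(6)] by (simp add: c'_def)
    moreover have "c' i1 = 0" by (simp add: c'_def mult.commute)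
    ultimately have "\<forall>m\<le>n. (\<Sum>i\<in>I - {i1}. c' i * v i False ^ (n - m) * v i True ^ m) = 0"
      using Suc.prems(1) i1 by (simp add: sum.remove)
    then have "c' i0 = 0"
      by (intro Suc.IH) (use Suc.prems i1 in auto)
    moreover have "v i1 True * v i0 False - v i1 False * v i0 True \<noteq> 0"
      using Suc.prems(5) i1 by (auto simp: proportional_def mult.commute)
    ultimately show ?thesis by (simp add: c'_def)
  qed
qed

lemma has_decomp_finite_sum:
  assumes "finite K"
  shows "has_decomp n (\<lambda>bs. \<Sum>k\<in>K. tpow n (x k) bs) (card K)"
proof -
  obtain h where "bij_betw h {1..card K} K"
    using ex_bij_betw_nat_finite_1[OF assms] by blast
  then have "(\<Sum>k\<in>{1..card K}. tpow n (x (h k)) bs) = (\<Sum>k\<in>K. tpow n (x k) bs)" for bs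
    by (rule sum.reindex_bij_betw)
  then have "(\<lambda>bs. \<Sum>k\<in>K. tpow n (x k) bs) = (\<lambda>bs. \<Sum>k\<in>{1..card K}. tpow n ((x \<circ> h) k) bs)"
    by simp
  then show ?thesis unfolding has_decomp_def by blast
qed

lemma has_decomp_drop_zero:
  assumes "n \<ge> 1" "j \<in> {1..D}" "x j = (\<lambda>_. 0)"
  shows "has_decomp n (\<lambda>bs. \<Sum>k\<in>{1..D}. tpow n (x k) bs) (D - 1)"
proof -
  have "(\<lambda>bs. \<Sum>k\<in>{1..D}. tpow n (x k) bs) = (\<lambda>bs. \<Sum>k\<in>{1..D} - {j}. tpow n (x k) bs)"
    using assms by (simp add: sum.remove tpow_zero_vector)
  with has_decomp_finite_sum[of "{1..D} - {j}" n x] assms(2) show ?thesis by simp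
qed

text \<open>The terms for u and t u merge into the single term for r u, where r ^ n = 1 + t ^ n.\<close>

lemma has_decomp_merge_multiple:
  assumes "n \<ge> 1" "i \<in> {1..D}" "j \<in> {1..D}" "i \<noteq> j" "x j = (\<lambda>v. t * x i v)"
  shows "has_decomp n (\<lambda>bs. \<Sum>k\<in>{1..D}. tpow n (x k) bs) (D - 1)"
proof -
  obtain r :: complex where r: "r ^ n = 1 + t ^ n"
    using complex_nth_root_exists[OF assms(1)] by blast
  define x' where "x' = x(i := (\<lambda>v. r * x i v))"
  let ?R = "{1..D} - {j} - {i}"
  have "(\<Sum>k\<in>{1..D}. tpow n (x k) bs) = (\<Sum>k\<in>{1..D} - {j}. tpow n (x' k) bs)" for bs
  proof -
    have rest: "(\<Sum>k\<in>?R. tpow n (x k) bs) = (\<Sum>k\<in>?R. tpow n (x' k) bs)"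
      by (simp add: x'_def)
    have "(\<Sum>k\<in>{1..D}. tpow n (x k) bs) = tpow n (x j) bs + (\<Sum>k\<in>{1..D} - {j}. tpow n (x k) bs)"
      using assms(3) by (intro sum.remove) auto
    also have "(\<Sum>k\<in>{1..D} - {j}. tpow n (x k) bs) = tpow n (x i) bs + (\<Sum>k\<in>?R. tpow n (x k) bs)"
      using assms(2,4) by (intro sum.remove) auto
    also have "tpow n (x j) bs + (tpow n (x i) bs + (\<Sum>k\<in>?R. tpow n (x k) bs))
             = tpow n (x' i) bs + (\<Sum>k\<in>?R. tpow n (x' k) bs)"
      using rest assms(5) r by (simp add: x'_def tpow_scaled algebra_simps)
    also have "\<dots> = (\<Sum>k\<in>{1..D} - {j}. tpow n (x' k) bs)"
      using assms(2,4) by (intro sum.remove[symmetric]) auto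
    finally show ?thesis .
  qed
  with has_decomp_finite_sum[of "{1..D} - {j}" n x'] assms(3) show ?thesis by simp
qed

lemma has_decomp_pos:
  assumes "has_decomp n \<psi> D" "\<psi> \<noteq> (\<lambda>_. 0)"
  shows "D \<ge> 1"
  using assms unfolding has_decomp_def by (cases D) auto

lemma bond_dim_le:
  assumes "has_decomp n \<psi> D" "\<psi> \<noteq> (\<lambda>_. 0)"
  shows "bond_dim n \<psi> \<le> D"
  unfolding bond_dim_def by (rule Least_le) (use assms has_decomp_pos[OF assms] in simp)

lemma has_decomp_bond_dim:
  assumes "has_decomp n \<psi> D" "\<psi> \<noteq> (\<lambda>_. 0)"
  shows "bond_dim n \<psi> \<ge> 1 \<and> has_decomp n \<psi> (bond_dim n \<psi>)"
  unfolding bond_dim_def by (rule LeastI[of _ D]) (use assms has_decomp_pos[OF assms] in simp)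

lemma optimal_decomp_nondegenerate:
  assumes "n \<ge> 1" and \<psi>: "\<psi> = (\<lambda>bs. \<Sum>k\<in>{1..D}. tpow n (x k) bs)"
    and "\<psi> \<noteq> (\<lambda>_. 0)" and D: "D = bond_dim n \<psi>"
  shows "D \<ge> 1" and "\<forall>k\<in>{1..D}. x k \<noteq> (\<lambda>_. 0)"
    and "\<forall>i\<in>{1..D}. \<forall>j\<in>{1..D}. i \<noteq> j \<longrightarrow> \<not> proportional (x i) (x j)"
proof -
  have "has_decomp n \<psi> D" using \<psi> unfolding has_decomp_def by blast
  with has_decomp_bond_dim assms(3) D show "D \<ge> 1" by simp
  have no_shorter: "\<not> has_decomp n \<psi> (D - 1)"
  proof
    assume "has_decomp n \<psi> (D - 1)"
    with bond_dim_le assms(3) D have "D \<le> D - 1" by simp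
    with \<open>D \<ge> 1\<close> show False by simp
  qed
  show nonzero: "\<forall>k\<in>{1..D}. x k \<noteq> (\<lambda>_. 0)"
  proof (intro ballI notI)
    fix k assume "k \<in> {1..D}" "x k = (\<lambda>_. 0)"
    then have "has_decomp n \<psi> (D - 1)"
      unfolding \<psi> by (rule has_decomp_drop_zero[OF assms(1)])
    with no_shorter show False ..
  qed
  show "\<forall>i\<in>{1..D}. \<forall>j\<in>{1..D}. i \<noteq> j \<longrightarrow> \<not> proportional (x i) (x j)"
  proof (intro ballI impI notI)
    fix i j assume ij: "i \<in> {1..D}" "j \<in> {1..D}" "i \<noteq> j" and "proportional (x i) (x j)"
    then obtain t where "x j = (\<lambda>v. t * x i v)"
      using proportional_imp_multiple[of "x i" "x j"] nonzero ij by blast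
    then have "has_decomp n \<psi> (D - 1)"
      unfolding \<psi> by (rule has_decomp_merge_multiple[OF assms(1) ij])
    with no_shorter show False ..
  qed
qed

text \<open>If x k0 were proportional to no y j, the two decompositions, with weights 1 and -1,
  would give a vanishing combination of degree n power sums of at most n + 1 vectors in which
  x k0 is isolated.\<close>

lemma equal_tpow_sums_proportional_partner:
  fixes x :: "'a \<Rightarrow> bool \<Rightarrow> complex" and y :: "'b \<Rightarrow> bool \<Rightarrow> complex"
  assumes "finite K" "finite J" "card K + card J \<le> n + 1"
    and "\<forall>k\<in>K. x k \<noteq> (\<lambda>_. 0)" and "\<forall>k\<in>K. \<forall>l\<in>K. k \<noteq> l \<longrightarrow> \<not> proportional (x k) (x l)"
    and eq: "(\<lambda>bs. \<Sum>k\<in>K. tpow n (x k) bs) = (\<lambda>bs. \<Sum>j\<in>J. tpow n (y j) bs)"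
    and "k0 \<in> K"
  shows "\<exists>j\<in>J. proportional (x k0) (y j)"
proof (rule ccontr)
  assume no_partner: "\<not> (\<exists>j\<in>J. proportional (x k0) (y j))"
  define I :: "('a + 'b) set" where "I = Inl ` K \<union> Inr ` J"
  define v where "v = case_sum x y"
  define c :: "'a + 'b \<Rightarrow> complex" where "c = case_sum (\<lambda>_. 1) (\<lambda>_. -1)"
  have sum_I: "(\<Sum>i\<in>I. f i) = (\<Sum>k\<in>K. f (Inl k)) + (\<Sum>j\<in>J. f (Inr j))"
    for f :: "'a + 'b \<Rightarrow> complex"
    unfolding I_def using assms(1,2) by (subst sum.union_disjoint) (auto simp: sum.reindex)
  have "c (Inl k0) = 0"
  proof (rule power_sums_vanish_imp_weight_zero[where I = I and n = n and v = v])
    show "finite I" unfolding I_def using assms(1,2) by simp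
    show "Inl k0 \<in> I" unfolding I_def using assms(7) by simp
    show "card I \<le> n + 1"
      unfolding I_def using assms(1-3) by (subst card_Un_disjoint) (auto simp: card_image)
    show "v (Inl k0) \<noteq> (\<lambda>_. 0)" using assms(4,7) by (simp add: v_def)
    show "\<forall>i\<in>I - {Inl k0}. \<not> proportional (v (Inl k0)) (v i)"
      using assms(5,7) no_partner unfolding I_def v_def by fastforce
    show "\<forall>m\<le>n. (\<Sum>i\<in>I. c i * v i False ^ (n - m) * v i True ^ m) = 0"
    proof (intro allI impI)
      fix m assume "m \<le> n"
      then have "(\<Sum>k\<in>K. x k False ^ (n - m) * x k True ^ m)
               = (\<Sum>j\<in>J. y j False ^ (n - m) * y j True ^ m)"
        using fun_cong[OF eq, of "weight_string n m"] by (simp add: tpow_weight_string)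
      then show "(\<Sum>i\<in>I. c i * v i False ^ (n - m) * v i True ^ m) = 0"
        unfolding sum_I by (simp add: c_def v_def sum_negf)
    qed
  qed
  then show False by (simp add: c_def)
qed

lemma equal_tpow_sums_card_le:
  fixes x :: "'a \<Rightarrow> bool \<Rightarrow> complex" and y :: "'b \<Rightarrow> bool \<Rightarrow> complex"
  assumes "finite K" "finite J" "card K \<le> n div 2 + 1"
    and "\<forall>k\<in>K. x k \<noteq> (\<lambda>_. 0)" and "\<forall>k\<in>K. \<forall>l\<in>K. k \<noteq> l \<longrightarrow> \<not> proportional (x k) (x l)"
    and "\<forall>j\<in>J. y j \<noteq> (\<lambda>_. 0)"
    and "(\<lambda>bs. \<Sum>k\<in>K. tpow n (x k) bs) = (\<lambda>bs. \<Sum>j\<in>J. tpow n (y j) bs)"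
  shows "card K \<le> card J"
proof (rule ccontr)
  assume "\<not> card K \<le> card J"
  with assms(3) have "card K + card J \<le> n + 1" by presburger
  then have "\<forall>k\<in>K. \<exists>j\<in>J. proportional (x k) (y j)"
    using equal_tpow_sums_proportional_partner[OF assms(1,2) _ assms(4,5,7)] by blast
  then obtain f where f: "\<forall>k\<in>K. f k \<in> J \<and> proportional (x k) (y (f k))"
    by metis
  have "inj_on f K"
  proof (rule inj_onI, rule ccontr)
    fix k l assume kl: "k \<in> K" "l \<in> K" "f k = f l" "k \<noteq> l"
    with f assms(6) proportional_trans have "proportional (x k) (x l)" by metis
    with assms(5) kl show False by blast
  qed
  with f assms(2) have "card K \<le> card J" by (intro card_inj_on_le) auto
  with \<open>\<not> card K \<le> card J\<close> show False ..
qed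

theorem theorem2:
  fixes N D :: nat and x :: "nat \<Rightarrow> bool \<Rightarrow> complex"
    and \<psi> \<psi>' :: "bool list \<Rightarrow> complex"
  assumes "N \<ge> 1"
    and "\<psi> = (\<lambda>bs. \<Sum>k\<in>{1..D}. tpow N (x k) bs)"
    and "\<psi> \<in> Sym N"
    and "\<psi> \<noteq> (\<lambda>_. 0)"
    and "D = bond_dim N \<psi>"
    and "bond_dim N \<psi> \<le> N div 2 + 1"
    and "\<psi>' = (\<lambda>bs. \<Sum>k\<in>{1..D}. tpow (N + 1) (x k) bs)"
  shows "\<psi>' \<noteq> (\<lambda>_. 0) \<and> bond_dim (N + 1) \<psi>' = bond_dim N \<psi>"
proof -
  note optimal = optimal_decomp_nondegenerate[OF assms(1,2,4,5)]
  have "card {1..D} \<le> (N + 1) div 2 + 1" using assms(5,6) by simp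
  then have D_le: "D \<le> card J"
    if "finite J" "\<forall>j\<in>J. y j \<noteq> (\<lambda>_. 0)" "\<psi>' = (\<lambda>bs. \<Sum>j\<in>J. tpow (N + 1) (y j) bs)"
    for J :: "nat set" and y
    using equal_tpow_sums_card_le[OF _ that(1) _ optimal(2,3) that(2)] that(3) assms(7) by simp
  have nonzero: "\<psi>' \<noteq> (\<lambda>_. 0)"
  proof
    assume "\<psi>' = (\<lambda>_. 0)"
    then have "D \<le> card {}" using D_le[of "{}" x] by simp
    with optimal(1) show False by simp
  qed
  have decomp: "has_decomp (N + 1) \<psi>' D" using assms(7) unfolding has_decomp_def by blast
  then obtain y where y: "\<psi>' = (\<lambda>bs. \<Sum>j\<in>{1..bond_dim (N + 1) \<psi>'}. tpow (N + 1) (y j) bs)"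
    using has_decomp_bond_dim[OF _ nonzero] unfolding has_decomp_def by blast
  have "D \<le> bond_dim (N + 1) \<psi>'"
    using D_le[OF _ _ y] optimal_decomp_nondegenerate(2)[OF _ y nonzero refl] by simp
  with bond_dim_le[OF decomp nonzero] nonzero assms(5) show ?thesis by simp
qed

end
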